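(* Let $\{\mathcal{C}_n\}$ be a sequence of binary linear codes with blocklengths $N_n\to\infty$ and rates $r_n\to r$ for some $r\in(0,1)$. Suppose there are sequences $0\le a_n<b_n\le1$ with $a_n\to0$, $b_n\to1$, and $w_n\to\infty$ such that the average EXIT function $h^{(n)}$ of $\mathcal{C}_n$ satisfies $$\frac{d h^{(n)}(p)}{dp}\ge w_n\log(N_n)\,h^{(n)}(p)\big(1-h^{(n)}(p)\big)\quad\text{for all }a_n<p<b_n.$$ Then $\{\mathcal{C}_n\}$ is capacity achieving on the BEC under block-MAP decoding.
   Context: Binary linear codes are assumed proper and of minimum distance at least $2$; rate $=K/N$; $\log$ is natural. A uniform codeword $\underline{X}$ is sent over $\mathrm{BEC}(p)$ (each bit erased independently with probability $p$), giving $\underline{Y}$. The average EXIT function is $h(p)=\frac1N\sum_{i=1}^N H(X_i\mid\underline{Y}_{\sim i})$ (entropy in bits; $\underline{Y}_{\sim i}$ omits coordinate $i$). $P_B(p)$ is the probability that $\underline{X}$ is not uniquely determined by $\underline{Y}$. A sequence of codes with rates $r_n\to r\in(0,1)$ is capacity achieving under block-MAP decoding if $\lim_n P_B^{(n)}(p)=0$ for every $p\in[0,1-r)$. *)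

theory Defs
  imports "HOL-Analysis.Analysis"
begin

text \<open>Binary vectors of length N are bool lists of length N; a received BEC symbol is
  a bool option (None = erasure).\<close>

definition xor_vec :: "bool list \<Rightarrow> bool list \<Rightarrow> bool list" where
  "xor_vec x y = map2 (\<noteq>) x y"

definition weight :: "bool list \<Rightarrow> nat" where
  "weight x = length (filter id x)"

definition binary_linear_code :: "nat \<Rightarrow> bool list set \<Rightarrow> bool" where
  "binary_linear_code N C \<longleftrightarrow>
     C \<subseteq> {x. length x = N} \<and> replicate N False \<in> C \<and>
     (\<forall>x\<in>C. \<forall>y\<in>C. xor_vec x y \<in> C)"

definition proper_code :: "nat \<Rightarrow> bool list set \<Rightarrow> bool" where
  "proper_code N C \<longleftrightarrow> (\<forall>i<N. \<exists>c\<in>C. c ! i)"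

definition min_dist_ge :: "nat \<Rightarrow> bool list set \<Rightarrow> bool" where
  "min_dist_ge d C \<longleftrightarrow> (\<forall>x\<in>C. \<forall>y\<in>C. x \<noteq> y \<longrightarrow> weight (xor_vec x y) \<ge> d)"

text \<open>Rate K/N, where K = dim C, i.e. |C| = 2^K.\<close>
definition code_rate :: "nat \<Rightarrow> bool list set \<Rightarrow> real" where
  "code_rate N C = log 2 (real (card C)) / real N"

definition bec_W :: "real \<Rightarrow> bool \<Rightarrow> bool option \<Rightarrow> real" where
  "bec_W p x y = (case y of None \<Rightarrow> p | Some b \<Rightarrow> (if b = x then 1 - p else 0))"

definition joint_prob :: "nat \<Rightarrow> bool list set \<Rightarrow> real \<Rightarrow> bool list \<Rightarrow> bool option list \<Rightarrow> real" where
  "joint_prob N C p x y = (1 / real (card C)) * (\<Prod>j<N. bec_W p (x ! j) (y ! j))"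

text \<open>Observations of Y with coordinate i omitted (coordinate i fixed to a dummy None).\<close>
definition obs_omit :: "nat \<Rightarrow> nat \<Rightarrow> bool option list set" where
  "obs_omit N i = {z. length z = N \<and> z ! i = None}"

definition joint_omit :: "nat \<Rightarrow> bool list set \<Rightarrow> real \<Rightarrow> nat \<Rightarrow> bool \<Rightarrow> bool option list \<Rightarrow> real" where
  "joint_omit N C p i b z =
     (\<Sum>x\<in>{x\<in>C. x ! i = b}. (1 / real (card C)) * (\<Prod>j\<in>{..<N} - {i}. bec_W p (x ! j) (z ! j)))"

definition marg_omit :: "nat \<Rightarrow> bool list set \<Rightarrow> real \<Rightarrow> nat \<Rightarrow> bool option list \<Rightarrow> real" where
  "marg_omit N C p i z = (\<Sum>b\<in>UNIV. joint_omit N C p i b z)"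

definition cond_entropy_omit :: "nat \<Rightarrow> bool list set \<Rightarrow> real \<Rightarrow> nat \<Rightarrow> real" where
  "cond_entropy_omit N C p i =
     - (\<Sum>z\<in>obs_omit N i. \<Sum>b\<in>UNIV.
          (let q = joint_omit N C p i b z
           in if q > 0 then q * log 2 (q / marg_omit N C p i z) else 0))"

definition exit_fun :: "nat \<Rightarrow> bool list set \<Rightarrow> real \<Rightarrow> real" where
  "exit_fun N C p = (1 / real N) * (\<Sum>i<N. cond_entropy_omit N C p i)"

definition compatible :: "bool list \<Rightarrow> bool option list \<Rightarrow> bool" where
  "compatible x y \<longleftrightarrow> (\<forall>j<length y. y ! j = None \<or> y ! j = Some (x ! j))"

definition block_error :: "nat \<Rightarrow> bool list set \<Rightarrow> real \<Rightarrow> real" where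
  "block_error N C p =
     (\<Sum>x\<in>C. \<Sum>y\<in>{y::bool option list. length y = N}.
        if (\<exists>x'\<in>C. x' \<noteq> x \<and> compatible x' y) then joint_prob N C p x y else 0)"

definition capacity_achieving ::
  "(nat \<Rightarrow> nat) \<Rightarrow> (nat \<Rightarrow> bool list set) \<Rightarrow> real \<Rightarrow> bool" where
  "capacity_achieving N C r \<longleftrightarrow>
     (\<forall>p. 0 \<le> p \<and> p < 1 - r \<longrightarrow> (\<lambda>n. block_error (N n) (C n) p) \<longlonglongrightarrow> 0)"

end

theory Submission
  imports Defs
begin

text \<open>For a linear code and the erasure channel, \<open>H(X\<^sub>i | Y\<^sub>\<sim>\<^sub>i)\<close> is the
  probability that bit \<open>i\<close> is not determined by the other received bits. Hence the block error
  probability is at most \<open>p N h(p)\<close> by the union bound, and the equivocation \<open>H(X | Y)\<close>, which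
  lies between \<open>0\<close> and \<open>N\<close> times the rate, has derivative \<open>N h(p)\<close> (area theorem).
  The inequality \<open>h' \<ge> w log N h (1 - h)\<close> makes \<open>h\<close> jump from almost \<open>0\<close> to almost \<open>1\<close>
  within a window of width \<open>O(1 / (w log N))\<close>. By the area theorem the jump cannot occur before
  \<open>1 - r - o(1)\<close>, so for \<open>p < 1 - r\<close> we get \<open>h(p) \<le> N powr (- w \<delta> / 2)\<close> for some
  \<open>\<delta> > 0\<close>, and the block error probability is at most \<open>N powr (1 - w \<delta> / 2) \<longlonglongrightarrow> 0\<close>.\<close>

section \<open>Subcodes vanishing on a set of positions\<close>

definition vanishing_subcode :: "bool list set \<Rightarrow> nat set \<Rightarrow> bool list set" where
  "vanishing_subcode C S = {c\<in>C. \<forall>j\<in>S. \<not> c ! j}"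

text \<open>The codewords agreeing with a codeword \<open>x\<close> on \<open>S\<close> form the coset
  \<open>x + vanishing_subcode C S\<close>, so bit \<open>i\<close> of \<open>x\<close> is determined by the bits in \<open>S\<close>
  unless \<open>undetermined C S i\<close>.\<close>
definition undetermined :: "bool list set \<Rightarrow> nat set \<Rightarrow> nat \<Rightarrow> bool" where
  "undetermined C S i \<longleftrightarrow> (\<exists>c\<in>vanishing_subcode C S. c ! i)"

lemma length_xor_vec [simp]: "length (xor_vec x y) = min (length x) (length y)"
  by (simp add: xor_vec_def)

lemma nth_xor_vec: "j < length x \<Longrightarrow> j < length y \<Longrightarrow> xor_vec x y ! j = (x ! j \<noteq> y ! j)"
  by (simp add: xor_vec_def)

lemma xor_vec_xor_vec: "length x = length y \<Longrightarrow> xor_vec x (xor_vec x y) = y"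
  by (rule nth_equalityI) (auto simp: nth_xor_vec)

context
  fixes N :: nat and C :: "bool list set"
  assumes C: "binary_linear_code N C"
begin

lemma code_length: "c \<in> C \<Longrightarrow> length c = N"
  using C unfolding binary_linear_code_def by auto

lemma code_xor: "x \<in> C \<Longrightarrow> y \<in> C \<Longrightarrow> xor_vec x y \<in> C"
  using C unfolding binary_linear_code_def by auto

lemma code_zero: "replicate N False \<in> C"
  using C unfolding binary_linear_code_def by auto

lemma code_finite: "finite C"
proof (rule finite_subset)
  show "C \<subseteq> {c. set c \<subseteq> UNIV \<and> length c = N}" using code_length by auto
qed (rule finite_lists_length_eq, simp)

lemma card_code_pos: "card C > 0"
  using code_finite code_zero card_gt_0_iff by blast

lemma card_translate:
  assumes x: "x \<in> C"
  shows "card {y\<in>C. Q (xor_vec x y)} = card {c\<in>C. Q c}"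
proof (rule bij_betw_same_card[of "xor_vec x"], rule bij_betw_byWitness[where f' = "xor_vec x"])
  have inv: "xor_vec x (xor_vec x c) = c" if "c \<in> C" for c
    using xor_vec_xor_vec code_length[OF x] code_length[OF that] by simp
  then show "\<forall>c\<in>{y\<in>C. Q (xor_vec x y)}. xor_vec x (xor_vec x c) = c"
    and "\<forall>c\<in>{c\<in>C. Q c}. xor_vec x (xor_vec x c) = c" by auto
  show "xor_vec x ` {y\<in>C. Q (xor_vec x y)} \<subseteq> {c\<in>C. Q c}" using code_xor[OF x] by blast
  show "xor_vec x ` {c\<in>C. Q c} \<subseteq> {y\<in>C. Q (xor_vec x y)}"
    using code_xor[OF x] inv by (auto simp: image_iff)
qed

lemma card_agreeing:
  assumes x: "x \<in> C" and T: "T \<subseteq> {..<N}"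
  shows "card {y\<in>C. \<forall>j\<in>T. y ! j = x ! j} = card (vanishing_subcode C T)"
proof -
  have "{y\<in>C. \<forall>j\<in>T. y ! j = x ! j} = {y\<in>C. \<forall>j\<in>T. \<not> xor_vec x y ! j}"
    using T code_length x by (auto simp: nth_xor_vec subset_iff)
  then show ?thesis
    using card_translate[OF x, of "\<lambda>c. \<forall>j\<in>T. \<not> c ! j"] by (simp add: vanishing_subcode_def)
qed

lemma card_vanishing_subcode_ge1: "S \<subseteq> {..<N} \<Longrightarrow> card (vanishing_subcode C S) \<ge> 1"
proof -
  assume "S \<subseteq> {..<N}"
  then have "replicate N False \<in> vanishing_subcode C S"
    using code_zero by (auto simp: vanishing_subcode_def)
  moreover have "finite (vanishing_subcode C S)"
    using code_finite by (simp add: vanishing_subcode_def)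
  ultimately show ?thesis
    by (metis One_nat_def Suc_leI card_gt_0_iff empty_iff)
qed

lemma card_vanishing_subcode_le: "card (vanishing_subcode C S) \<le> card C"
  using code_finite by (intro card_mono) (auto simp: vanishing_subcode_def)

lemma card_vanishing_subcode_double:
  assumes i: "i < N" and S: "S \<subseteq> {..<N}" and u: "undetermined C S i"
  shows "card (vanishing_subcode C S) = 2 * card (vanishing_subcode C (insert i S))"
proof -
  obtain c where c: "c \<in> vanishing_subcode C S" "c ! i"
    using u by (auto simp: undetermined_def)
  have cC: "c \<in> C" using c by (simp add: vanishing_subcode_def)
  let ?V = "vanishing_subcode C S" and ?W = "vanishing_subcode C (insert i S)"
  have "{y\<in>?V. y ! i} = {y\<in>C. xor_vec c y \<in> ?W}"
    using c cC i S code_length code_xor[OF cC]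
    by (auto simp: vanishing_subcode_def nth_xor_vec subset_iff)
  also have "card \<dots> = card {y\<in>C. y \<in> ?W}" by (rule card_translate[OF cC])
  also have "{y\<in>C. y \<in> ?W} = ?W" by (auto simp: vanishing_subcode_def)
  finally have "card {y\<in>?V. y ! i} = card ?W" .
  moreover have "?V = ?W \<union> {y\<in>?V. y ! i}" and "?W \<inter> {y\<in>?V. y ! i} = {}"
    by (auto simp: vanishing_subcode_def)
  moreover have "finite ?V" using code_finite by (simp add: vanishing_subcode_def)
  ultimately show ?thesis
    by (metis card_Un_disjoint finite_Un mult_2)
qed

lemma log_card_vanishing_subcode_insert:
  assumes i: "i < N" and S: "S \<subseteq> {..<N}"
  shows "log 2 (card (vanishing_subcode C S))
       = log 2 (card (vanishing_subcode C (insert i S))) + of_bool (undetermined C S i)"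
proof (cases "undetermined C S i")
  case True
  have "card (vanishing_subcode C (insert i S)) \<ge> 1"
    using card_vanishing_subcode_ge1 S i by simp
  then show ?thesis
    using card_vanishing_subcode_double[OF i S True] True by (simp add: log_mult)
next
  case False
  then have "vanishing_subcode C S = vanishing_subcode C (insert i S)"
    by (auto simp: undetermined_def vanishing_subcode_def)
  then show ?thesis using False by simp
qed

end

section \<open>Received words of the erasure channel\<close>

definition reception_prob :: "real \<Rightarrow> nat set \<Rightarrow> nat set \<Rightarrow> real" where
  "reception_prob p I S = (\<Prod>j\<in>I. if j \<in> S then 1 - p else p)"

definition received_word :: "nat \<Rightarrow> bool list \<Rightarrow> nat set \<Rightarrow> bool option list" where
  "received_word N x S = map (\<lambda>j. if j \<in> S then Some (x ! j) else None) [0..<N]"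

lemma length_received_word [simp]: "length (received_word N x S) = N"
  by (simp add: received_word_def)

lemma nth_received_word:
  "j < N \<Longrightarrow> received_word N x S ! j = (if j \<in> S then Some (x ! j) else None)"
  by (simp add: received_word_def)

lemma bec_W_nonneg: "0 \<le> p \<Longrightarrow> p \<le> 1 \<Longrightarrow> bec_W p x y \<ge> 0"
  by (auto simp: bec_W_def split: option.splits)

lemma reception_prob_nonneg: "0 \<le> p \<Longrightarrow> p \<le> 1 \<Longrightarrow> reception_prob p I S \<ge> 0"
  unfolding reception_prob_def by (intro prod_nonneg) auto

lemma sum_reception_prob: "finite I \<Longrightarrow> (\<Sum>S\<in>Pow I. reception_prob p I S) = 1"
proof -
  assume I: "finite I"
  have "(\<Sum>S\<in>Pow I. reception_prob p I S) = (\<Sum>S\<in>Pow I. (\<Prod>j\<in>S. 1 - p) * (\<Prod>j\<in>I - S. p))"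
    using I by (intro sum.cong refl)
      (auto simp: reception_prob_def prod.If_cases Int_absorb1 Diff_eq)
  also have "\<dots> = (\<Prod>j\<in>I. (1 - p) + p)" by (rule prod_add[OF I, symmetric])
  finally show ?thesis by simp
qed

lemma reception_prob_insert: "j \<notin> I \<Longrightarrow> reception_prob p I (insert j S) = reception_prob p I S"
  unfolding reception_prob_def by (intro prod.cong) auto

lemma reception_prob_erased:
  "finite I \<Longrightarrow> j \<in> I \<Longrightarrow> j \<notin> S \<Longrightarrow> reception_prob p I S = p * reception_prob p (I - {j}) S"
  unfolding reception_prob_def by (subst prod.remove) auto

lemma reception_prob_has_derivative:
  "((\<lambda>p. reception_prob p I S) has_field_derivative
     (\<Sum>j\<in>I. (if j \<in> S then -1 else 1) * reception_prob p (I - {j}) S)) (at p)"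
  unfolding reception_prob_def
  by (rule has_field_derivative_prod) (auto intro!: derivative_eq_intros)

lemma sum_Pow_pairs:
  assumes "finite U" "j \<in> U"
  shows "(\<Sum>S\<in>Pow U. g S) = (\<Sum>S\<in>Pow (U - {j}). g S + g (insert j S))"
proof -
  have "Pow U = Pow (U - {j}) \<union> insert j ` Pow (U - {j})"
    using Pow_insert[of j "U - {j}"] assms(2) by (simp add: insert_absorb)
  moreover have "Pow (U - {j}) \<inter> insert j ` Pow (U - {j}) = {}" by auto
  moreover have "inj_on (insert j) (Pow (U - {j}))" by (rule inj_onI) auto
  ultimately show ?thesis using assms
    by (simp add: sum.union_disjoint sum.reindex sum.distrib)
qed

lemma sum_reception_prob_erased:
  assumes U: "finite U"
  shows "(\<Sum>S\<in>Pow U. reception_prob p U S * (\<Sum>i\<in>U - S. g S i))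
       = p * (\<Sum>i\<in>U. \<Sum>S\<in>Pow (U - {i}). reception_prob p (U - {i}) S * g S i)"
proof -
  have "(\<Sum>S\<in>Pow U. reception_prob p U S * (\<Sum>i\<in>U - S. g S i))
      = (\<Sum>S\<in>Pow U. \<Sum>i\<in>{i. i \<in> U \<and> i \<notin> S}. reception_prob p U S * g S i)"
    by (simp add: sum_distrib_left set_diff_eq conj_commute)
  also have "\<dots> = (\<Sum>i\<in>U. \<Sum>S\<in>{S. S \<in> Pow U \<and> i \<notin> S}. reception_prob p U S * g S i)"
    by (rule sum.swap_restrict) (use U in auto)
  also have "\<dots> = (\<Sum>i\<in>U. \<Sum>S\<in>Pow (U - {i}). p * (reception_prob p (U - {i}) S * g S i))"
  proof (intro sum.cong)
    fix i S assume "i \<in> U" "S \<in> Pow (U - {i})"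
    then show "reception_prob p U S * g S i = p * (reception_prob p (U - {i}) S * g S i)"
      using reception_prob_erased[OF U] by auto
  qed auto
  finally show ?thesis by (simp add: sum_distrib_left)
qed

lemma finite_lists_of_length: "finite {z::'a::finite list. length z = N \<and> P z}"
  using finite_lists_length_eq[of "UNIV :: 'a set" N] by (rule finite_subset[rotated]) auto

lemma prod_bec_received_word:
  assumes y: "length y = N" and x: "length x = N" and I: "I \<subseteq> {..<N}" and S: "S \<subseteq> I"
  shows "(\<Prod>j\<in>I. bec_W p (y ! j) (received_word N x S ! j))
       = (if \<forall>j\<in>S. y ! j = x ! j then reception_prob p I S else 0)"
proof (cases "\<forall>j\<in>S. y ! j = x ! j")
  case True
  then show ?thesis
    unfolding reception_prob_def using I by (auto intro!: prod.cong simp: nth_received_word bec_W_def)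
next
  case False
  then obtain j where j: "j \<in> S" "y ! j \<noteq> x ! j" by blast
  then have "\<exists>j\<in>I. bec_W p (y ! j) (received_word N x S ! j) = 0"
    using S I by (intro bexI[of _ j]) (auto simp: nth_received_word bec_W_def)
  then have "(\<Prod>j\<in>I. bec_W p (y ! j) (received_word N x S ! j)) = 0"
    by (rule prod_zero[OF finite_subset[OF I], rotated]) simp
  with False show ?thesis by (simp only: if_not_P if_False)
qed

text \<open>Given \<open>x\<close>, only the outputs \<open>received_word N x S\<close> have positive probability.\<close>
lemma sum_outputs_eq_sum_received:
  assumes x: "length x = N" and I: "I \<subseteq> {..<N}"
  shows "(\<Sum>z\<in>{z. length z = N \<and> (\<forall>j<N. j \<notin> I \<longrightarrow> z ! j = None)}.
            (\<Prod>j\<in>I. bec_W p (x ! j) (z ! j)) * \<phi> z)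
       = (\<Sum>S\<in>Pow I. reception_prob p I S * \<phi> (received_word N x S))"
proof -
  let ?Z = "{z. length z = N \<and> (\<forall>j<N. j \<notin> I \<longrightarrow> z ! j = None)}"
  let ?P = "\<lambda>z. \<Prod>j\<in>I. bec_W p (x ! j) (z ! j)"
  have received: "received_word N x ` Pow I \<subseteq> ?Z"
    using I by (auto simp: nth_received_word)
  have vanish: "?P z = 0" if z: "z \<in> ?Z - received_word N x ` Pow I" for z
  proof -
    let ?w = "received_word N x {j\<in>I. z ! j \<noteq> None}"
    have "\<exists>j<N. z ! j \<noteq> ?w ! j"
    proof (rule ccontr)
      assume "\<not> ?thesis"
      then have "z = ?w" using z by (intro nth_equalityI) auto
      then show False using z by blast
    qed
    then obtain j where j: "j < N" "z ! j \<noteq> ?w ! j" by blast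
    then have "j \<in> I" "bec_W p (x ! j) (z ! j) = 0"
      using z by (auto simp: nth_received_word bec_W_def split: option.splits if_splits)
    then show ?thesis using finite_subset[OF I] by (auto intro: prod_zero)
  qed
  have inj: "inj_on (received_word N x) (Pow I)"
  proof (rule inj_onI)
    fix S T assume ST: "S \<in> Pow I" "T \<in> Pow I" and eq: "received_word N x S = received_word N x T"
    have "j \<in> S \<longleftrightarrow> j \<in> T" if "j \<in> I" for j
      using arg_cong[OF eq, of "\<lambda>z. z ! j"] that I by (auto simp: nth_received_word split: if_splits)
    then show "S = T" using ST by blast
  qed
  have "(\<Sum>z\<in>?Z. ?P z * \<phi> z) = (\<Sum>z\<in>received_word N x ` Pow I. ?P z * \<phi> z)"
    by (rule sum.mono_neutral_right[OF finite_lists_of_length received]) (use vanish in auto)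
  also have "\<dots> = (\<Sum>S\<in>Pow I. ?P (received_word N x S) * \<phi> (received_word N x S))"
    by (rule sum.reindex[OF inj, unfolded comp_def])
  also have "\<dots> = (\<Sum>S\<in>Pow I. reception_prob p I S * \<phi> (received_word N x S))"
    using prod_bec_received_word[OF x x I] by (intro sum.cong refl) auto
  finally show ?thesis .
qed

lemma sum_prob_received_agreeing:
  assumes C: "binary_linear_code N C" and x: "x \<in> C"
    and I: "I \<subseteq> {..<N}" and S: "S \<subseteq> I" and T: "T \<subseteq> {..<N}"
  shows "(\<Sum>y\<in>{y\<in>C. \<forall>j\<in>T. y ! j = x ! j}. (\<Prod>j\<in>I. bec_W p (y ! j) (received_word N x S ! j)))
       = reception_prob p I S * card (vanishing_subcode C (T \<union> S))"
    (is "(\<Sum>y\<in>?A. _) = _")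
proof -
  have "(\<Sum>y\<in>?A. (\<Prod>j\<in>I. bec_W p (y ! j) (received_word N x S ! j)))
      = (\<Sum>y\<in>?A. if \<forall>j\<in>S. y ! j = x ! j then reception_prob p I S else 0)"
  proof (rule sum.cong[OF refl])
    fix y assume "y \<in> ?A"
    then show "(\<Prod>j\<in>I. bec_W p (y ! j) (received_word N x S ! j))
             = (if \<forall>j\<in>S. y ! j = x ! j then reception_prob p I S else 0)"
      by (intro prod_bec_received_word[OF code_length[OF C] code_length[OF C x] I S]) simp
  qed
  also have "\<dots> = reception_prob p I S * card {y\<in>?A. \<forall>j\<in>S. y ! j = x ! j}"
    using code_finite[OF C] by (simp add: sum.If_cases Int_def)
  also have "{y\<in>?A. \<forall>j\<in>S. y ! j = x ! j} = {y\<in>C. \<forall>j\<in>T \<union> S. y ! j = x ! j}"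
    by auto
  also have "card \<dots> = card (vanishing_subcode C (T \<union> S))"
    using card_agreeing[OF C x] T S I by simp
  finally show ?thesis .
qed

section \<open>The EXIT function and the equivocation\<close>

definition undetermined_prob :: "nat \<Rightarrow> bool list set \<Rightarrow> real \<Rightarrow> nat \<Rightarrow> real" where
  "undetermined_prob N C p i =
     (\<Sum>S\<in>Pow ({..<N} - {i}). reception_prob p ({..<N} - {i}) S * of_bool (undetermined C S i))"

text \<open>The conditional entropy \<open>H(X | Y)\<close> in bits: given the received positions \<open>S\<close>, the sent
  codeword is uniform on a coset of the subcode vanishing on \<open>S\<close>.\<close>
definition equivocation :: "nat \<Rightarrow> bool list set \<Rightarrow> real \<Rightarrow> real" where
  "equivocation N C p =
     (\<Sum>S\<in>Pow {..<N}. reception_prob p {..<N} S * log 2 (card (vanishing_subcode C S)))"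

lemma sum_group_finite_range:
  fixes f :: "'a \<Rightarrow> 'b::finite"
  assumes A: "finite A"
  shows "(\<Sum>b\<in>UNIV. \<Sum>x\<in>{x\<in>A. f x = b}. g x b) = (\<Sum>x\<in>A. g x (f x))"
proof -
  have "(\<Sum>b\<in>UNIV. \<Sum>x\<in>{x\<in>A. f x = b}. g x b) = (\<Sum>b\<in>UNIV. \<Sum>x\<in>{x\<in>A. f x = b}. g x (f x))"
    by (intro sum.cong refl) auto
  also have "\<dots> = (\<Sum>x\<in>A. g x (f x))" by (rule sum.group[OF A]) auto
  finally show ?thesis .
qed

context
  fixes N :: nat and C :: "bool list set" and p :: real and i :: nat
  assumes C: "binary_linear_code N C" and i: "i < N"
begin

lemma marg_omit_eq:
  "marg_omit N C p i z = (\<Sum>y\<in>C. \<Prod>j\<in>{..<N} - {i}. bec_W p (y ! j) (z ! j)) / card C"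
  unfolding marg_omit_def joint_omit_def
  by (simp add: sum_group_finite_range[OF code_finite[OF C]] sum_divide_distrib)

lemma joint_omit_received_word:
  assumes x: "x \<in> C" and S: "S \<subseteq> {..<N} - {i}"
  shows "joint_omit N C p i (x ! i) (received_word N x S)
       = reception_prob p ({..<N} - {i}) S * card (vanishing_subcode C (insert i S)) / card C"
proof -
  have "{y\<in>C. y ! i = x ! i} = {y\<in>C. \<forall>j\<in>{i}. y ! j = x ! j}" by simp
  then show ?thesis
    using sum_prob_received_agreeing[OF C x _ S, of "{i}" p] i
    by (simp add: joint_omit_def sum_divide_distrib[symmetric])
qed

lemma marg_omit_received_word:
  assumes x: "x \<in> C" and S: "S \<subseteq> {..<N} - {i}"
  shows "marg_omit N C p i (received_word N x S)
       = reception_prob p ({..<N} - {i}) S * card (vanishing_subcode C S) / card C"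
  using sum_prob_received_agreeing[OF C x _ S, of "{}" p] by (simp add: marg_omit_eq)

lemma log_posterior_received_word:
  assumes x: "x \<in> C" and S: "S \<subseteq> {..<N} - {i}"
  shows "reception_prob p ({..<N} - {i}) S
           * log 2 (joint_omit N C p i (x ! i) (received_word N x S) / marg_omit N C p i (received_word N x S))
       = - reception_prob p ({..<N} - {i}) S * of_bool (undetermined C S i)"
proof (cases "reception_prob p ({..<N} - {i}) S = 0")
  case False
  have S': "S \<subseteq> {..<N}" "insert i S \<subseteq> {..<N}" using S i by auto
  have "card (vanishing_subcode C S) \<ge> 1" "card (vanishing_subcode C (insert i S)) \<ge> 1"
    using card_vanishing_subcode_ge1[OF C] S' by auto
  then show ?thesis
    using False card_code_pos[OF C] log_card_vanishing_subcode_insert[OF C i S'(1)]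
    by (simp add: joint_omit_received_word[OF x S] marg_omit_received_word[OF x S] log_divide)
qed simp

lemma cond_entropy_omit_eq_undetermined_prob:
  assumes p: "0 \<le> p" "p \<le> 1"
  shows "cond_entropy_omit N C p i = undetermined_prob N C p i"
proof -
  define I where "I = {..<N} - {i}"
  define P where "P x z = (\<Prod>j\<in>I. bec_W p (x ! j) (z ! j))" for x z
  define q where "q b z = joint_omit N C p i b z" for b z
  define m where "m z = marg_omit N C p i z" for z
  let ?k = "real (card C)"
  have I: "I \<subseteq> {..<N}" by (auto simp: I_def)
  have q_def': "q b z = (\<Sum>x\<in>{x\<in>C. x ! i = b}. P x z / ?k)" for b z
    by (simp add: q_def joint_omit_def P_def I_def)
  have q_nonneg: "q b z \<ge> 0" for b z
    unfolding q_def' P_def using p by (intro sum_nonneg divide_nonneg_nonneg prod_nonneg bec_W_nonneg) auto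
  have obs: "obs_omit N i = {z. length z = N \<and> (\<forall>j<N. j \<notin> I \<longrightarrow> z ! j = None)}"
    using i by (auto simp: obs_omit_def I_def)
  have "cond_entropy_omit N C p i = - (\<Sum>z\<in>obs_omit N i. \<Sum>b\<in>UNIV. q b z * log 2 (q b z / m z))"
    unfolding cond_entropy_omit_def q_def[symmetric] m_def[symmetric] Let_def
    using q_nonneg by (intro arg_cong[where f = uminus] sum.cong refl) (simp add: less_le)
  also have "\<dots> = - (\<Sum>z\<in>obs_omit N i. \<Sum>x\<in>C. P x z / ?k * log 2 (q (x ! i) z / m z))"
    unfolding q_def' sum_distrib_right
    by (simp add: sum_group_finite_range[OF code_finite[OF C], where f = "\<lambda>x. x ! i"])
  also have "\<dots> = - (\<Sum>x\<in>C. (\<Sum>z\<in>obs_omit N i. P x z * log 2 (q (x ! i) z / m z)) / ?k)"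
    by (subst sum.swap) (simp add: sum_divide_distrib)
  also have "\<dots> = - (\<Sum>x\<in>C. (\<Sum>S\<in>Pow I. - reception_prob p I S * of_bool (undetermined C S i)) / ?k)"
  proof (intro arg_cong[where f = uminus] sum.cong refl arg_cong[where f = "\<lambda>t. t / ?k"])
    fix x assume x: "x \<in> C"
    have "(\<Sum>z\<in>obs_omit N i. P x z * log 2 (q (x ! i) z / m z))
        = (\<Sum>S\<in>Pow I. reception_prob p I S
             * log 2 (q (x ! i) (received_word N x S) / m (received_word N x S)))"
      unfolding obs P_def by (rule sum_outputs_eq_sum_received[OF code_length[OF C x] I])
    also have "\<dots> = (\<Sum>S\<in>Pow I. - reception_prob p I S * of_bool (undetermined C S i))"
      unfolding q_def m_def I_def by (intro sum.cong refl log_posterior_received_word[OF x]) auto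
    finally show "(\<Sum>z\<in>obs_omit N i. P x z * log 2 (q (x ! i) z / m z))
        = (\<Sum>S\<in>Pow I. - reception_prob p I S * of_bool (undetermined C S i))" .
  qed
  also have "\<dots> = undetermined_prob N C p i"
    using card_code_pos[OF C] by (simp add: undetermined_prob_def I_def sum_negf)
  finally show ?thesis .
qed

end

lemma undetermined_prob_bounds:
  assumes "0 \<le> p" "p \<le> 1"
  shows "0 \<le> undetermined_prob N C p i" "undetermined_prob N C p i \<le> 1"
proof -
  show "0 \<le> undetermined_prob N C p i"
    unfolding undetermined_prob_def using reception_prob_nonneg[OF assms] by (simp add: sum_nonneg)
  have "undetermined_prob N C p i \<le> (\<Sum>S\<in>Pow ({..<N} - {i}). reception_prob p ({..<N} - {i}) S)"
    unfolding undetermined_prob_def using reception_prob_nonneg[OF assms]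
    by (intro sum_mono) (simp add: mult_left_le)
  also have "\<dots> = 1" by (simp add: sum_reception_prob)
  finally show "undetermined_prob N C p i \<le> 1" .
qed

lemma undetermined_prob_differentiable: "(\<lambda>p. undetermined_prob N C p i) differentiable (at p)"
proof -
  have "(\<lambda>p. reception_prob p I S) differentiable (at p)" for I S
    using reception_prob_has_derivative real_differentiable_def by blast
  then show ?thesis
    unfolding undetermined_prob_def by (intro differentiable_sum differentiable_mult differentiable_const) auto
qed

context
  fixes N :: nat and C :: "bool list set"
  assumes C: "binary_linear_code N C"
begin

lemma exit_fun_eq_undetermined_prob:
  assumes "0 \<le> p" "p \<le> 1"
  shows "exit_fun N C p = (\<Sum>i<N. undetermined_prob N C p i) / N"
  using cond_entropy_omit_eq_undetermined_prob[OF C _ assms] by (simp add: exit_fun_def)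

lemma exit_fun_bounds:
  assumes "0 \<le> p" "p \<le> 1"
  shows "0 \<le> exit_fun N C p" "exit_fun N C p \<le> 1"
proof -
  have "(\<Sum>i<N. undetermined_prob N C p i) \<le> (\<Sum>i<N. 1)"
    by (rule sum_mono) (use undetermined_prob_bounds[OF assms] in auto)
  moreover have "0 \<le> (\<Sum>i<N. undetermined_prob N C p i)"
    by (rule sum_nonneg) (use undetermined_prob_bounds[OF assms] in auto)
  ultimately show "0 \<le> exit_fun N C p" "exit_fun N C p \<le> 1"
    by (auto simp: exit_fun_eq_undetermined_prob[OF assms] divide_le_eq_1)
qed

lemma exit_fun_has_derivative:
  assumes "0 < p" "p < 1"
  shows "(exit_fun N C has_field_derivative deriv (exit_fun N C) p) (at p)"
proof -
  let ?G = "\<lambda>p. 1 / N * (\<Sum>i<N. undetermined_prob N C p i)"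
  have "?G differentiable (at p)"
    by (intro differentiable_mult differentiable_const differentiable_sum)
      (auto intro: undetermined_prob_differentiable)
  then have "(?G has_field_derivative deriv ?G p) (at p)"
    by (simp add: DERIV_deriv_iff_real_differentiable)
  then have "(exit_fun N C has_field_derivative deriv ?G p) (at p)"
    by (rule has_field_derivative_transform_within_open[of _ _ _ "{0<..<1}"])
      (use assms in \<open>auto simp: exit_fun_eq_undetermined_prob\<close>)
  then show ?thesis using DERIV_imp_deriv by metis
qed

lemma equivocation_bounds:
  assumes "0 \<le> p" "p \<le> 1"
  shows "0 \<le> equivocation N C p" "equivocation N C p \<le> log 2 (card C)"
proof -
  have log: "0 \<le> log 2 (card (vanishing_subcode C S))"
    "log 2 (card (vanishing_subcode C S)) \<le> log 2 (card C)" if "S \<in> Pow {..<N}" for S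
  proof -
    have "1 \<le> real (card (vanishing_subcode C S))" "real (card (vanishing_subcode C S)) \<le> card C"
      using card_vanishing_subcode_ge1[OF C, of S] card_vanishing_subcode_le[OF C, of S] that by auto
    then show "0 \<le> log 2 (card (vanishing_subcode C S))"
      "log 2 (card (vanishing_subcode C S)) \<le> log 2 (card C)" by simp_all
  qed
  show "0 \<le> equivocation N C p"
    unfolding equivocation_def using reception_prob_nonneg[OF assms] log(1)
    by (intro sum_nonneg mult_nonneg_nonneg) auto
  have "equivocation N C p \<le> (\<Sum>S\<in>Pow {..<N}. reception_prob p {..<N} S * log 2 (card C))"
    unfolding equivocation_def using reception_prob_nonneg[OF assms] log(2)
    by (intro sum_mono mult_left_mono) auto
  also have "\<dots> = log 2 (card C)" by (simp add: sum_reception_prob flip: sum_distrib_right)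
  finally show "equivocation N C p \<le> log 2 (card C)" .
qed

lemma equivocation_has_derivative:
  "(equivocation N C has_field_derivative (\<Sum>i<N. undetermined_prob N C p i)) (at p)"
proof -
  let ?U = "{..<N}" and ?l = "\<lambda>S. log 2 (card (vanishing_subcode C S))"
  let ?d = "\<lambda>j S. (if j \<in> S then -1 else 1) * reception_prob p (?U - {j}) S"
  have "(equivocation N C has_field_derivative (\<Sum>S\<in>Pow ?U. (\<Sum>j\<in>?U. ?d j S) * ?l S)) (at p)"
    unfolding equivocation_def by (intro DERIV_sum DERIV_cmult_right reception_prob_has_derivative)
  also have "(\<Sum>S\<in>Pow ?U. (\<Sum>j\<in>?U. ?d j S) * ?l S) = (\<Sum>j\<in>?U. \<Sum>S\<in>Pow ?U. ?d j S * ?l S)"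
    by (simp add: sum_distrib_right sum.swap[of _ "Pow ?U"])
  also have "\<dots> = (\<Sum>j\<in>?U. undetermined_prob N C p j)"
  proof (intro sum.cong refl)
    fix j assume j: "j \<in> ?U"
    have "(\<Sum>S\<in>Pow ?U. ?d j S * ?l S) = (\<Sum>S\<in>Pow (?U - {j}). ?d j S * ?l S + ?d j (insert j S) * ?l (insert j S))"
      using j by (intro sum_Pow_pairs) auto
    also have "\<dots> = (\<Sum>S\<in>Pow (?U - {j}). reception_prob p (?U - {j}) S * of_bool (undetermined C S j))"
    proof (intro sum.cong refl)
      fix S assume "S \<in> Pow (?U - {j})"
      then have S: "S \<subseteq> ?U" "j \<notin> S" by auto
      then show "?d j S * ?l S + ?d j (insert j S) * ?l (insert j S)
          = reception_prob p (?U - {j}) S * of_bool (undetermined C S j)"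
        using j log_card_vanishing_subcode_insert[OF C _ S(1), of j]
        by (simp add: reception_prob_insert algebra_simps)
    qed
    finally show "(\<Sum>S\<in>Pow ?U. ?d j S * ?l S) = undetermined_prob N C p j"
      by (simp add: undetermined_prob_def)
  qed
  finally show ?thesis .
qed

lemma ambiguous_imp_undetermined:
  assumes x: "x \<in> C" and x': "x' \<in> C" "x' \<noteq> x" "compatible x' (received_word N x S)"
    and S: "S \<subseteq> {..<N}"
  shows "\<exists>i\<in>{..<N} - S. undetermined C S i"
proof -
  have len: "length x = N" "length x' = N" using code_length[OF C] x x' by auto
  have "\<exists>i<N. x ! i \<noteq> x' ! i"
  proof (rule ccontr)
    assume "\<not> ?thesis"
    then have "x = x'" using len by (intro nth_equalityI) auto
    with x'(2) show False by simp
  qed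
  then obtain i where i: "i < N" "x ! i \<noteq> x' ! i" by blast
  have agree: "x ! j = x' ! j" if "j \<in> S" for j
    using x'(3) that S by (auto simp: compatible_def nth_received_word)
  have "xor_vec x x' \<in> vanishing_subcode C S" "xor_vec x x' ! i"
    using code_xor[OF C x x'(1)] agree S i len by (auto simp: vanishing_subcode_def nth_xor_vec)
  moreover have "i \<notin> S" using agree i by blast
  ultimately show ?thesis using i by (auto simp: undetermined_def)
qed

lemma block_error_le:
  assumes p: "0 \<le> p" "p \<le> 1"
  shows "block_error N C p \<le> p * (N * exit_fun N C p)"
proof -
  let ?U = "{..<N}" and ?k = "real (card C)"
  let ?E = "\<lambda>x y. \<exists>x'\<in>C. x' \<noteq> x \<and> compatible x' y"
  let ?u = "\<lambda>S. \<Sum>i\<in>?U - S. of_bool (undetermined C S i) :: real"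
  have "(\<Sum>y\<in>{y. length y = N}. if ?E x y then joint_prob N C p x y else 0)
      \<le> (\<Sum>S\<in>Pow ?U. reception_prob p ?U S * ?u S) / ?k" if x: "x \<in> C" for x
  proof -
    have "(\<Sum>y\<in>{y. length y = N}. if ?E x y then joint_prob N C p x y else 0)
        = (\<Sum>y\<in>{y. length y = N \<and> (\<forall>j<N. j \<notin> ?U \<longrightarrow> y ! j = None)}.
            (\<Prod>j\<in>?U. bec_W p (x ! j) (y ! j)) * (of_bool (?E x y) / ?k))"
      by (intro sum.cong) (auto simp: joint_prob_def)
    also have "\<dots> = (\<Sum>S\<in>Pow ?U. reception_prob p ?U S * (of_bool (?E x (received_word N x S)) / ?k))"
      by (rule sum_outputs_eq_sum_received[OF code_length[OF C x]]) simp
    also have "\<dots> = (\<Sum>S\<in>Pow ?U. reception_prob p ?U S * of_bool (?E x (received_word N x S))) / ?k"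
      by (simp only: times_divide_eq_right sum_divide_distrib)
    also have "\<dots> \<le> (\<Sum>S\<in>Pow ?U. reception_prob p ?U S * ?u S) / ?k"
    proof (intro divide_right_mono sum_mono mult_left_mono reception_prob_nonneg p)
      fix S assume "S \<in> Pow ?U"
      then show "of_bool (?E x (received_word N x S)) \<le> ?u S"
        using ambiguous_imp_undetermined[OF x] member_le_sum[of _ "?U - S" "\<lambda>i. of_bool (undetermined C S i)"]
        by (cases "?E x (received_word N x S)") (force intro!: sum_nonneg)+
    qed simp
    finally show ?thesis .
  qed
  then have "block_error N C p \<le> (\<Sum>x\<in>C. (\<Sum>S\<in>Pow ?U. reception_prob p ?U S * ?u S) / ?k)"
    unfolding block_error_def by (intro sum_mono) auto
  also have "\<dots> = (\<Sum>S\<in>Pow ?U. reception_prob p ?U S * ?u S)"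
    using card_code_pos[OF C] by (simp only: sum_constant) simp
  also have "\<dots> = p * (\<Sum>i<N. undetermined_prob N C p i)"
    unfolding undetermined_prob_def by (rule sum_reception_prob_erased) simp
  also have "\<dots> = p * (N * exit_fun N C p)"
    by (simp add: exit_fun_eq_undetermined_prob[OF p])
  finally show ?thesis .
qed

lemma block_error_nonneg: "0 \<le> p \<Longrightarrow> p \<le> 1 \<Longrightarrow> 0 \<le> block_error N C p"
  unfolding block_error_def joint_prob_def
  by (intro sum_nonneg) (auto intro!: divide_nonneg_nonneg prod_nonneg bec_W_nonneg)

lemma block_error_zero: "block_error N C 0 = 0"
  using block_error_le[of 0] block_error_nonneg[of 0] by simp

end

section \<open>The logistic differential inequality\<close>

locale logistic_supersolution =
  fixes h h' :: "real \<Rightarrow> real" and a b L :: real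
  assumes has_derivative: "\<And>t. a < t \<Longrightarrow> t < b \<Longrightarrow> (h has_field_derivative h' t) (at t)"
    and logistic: "\<And>t. a < t \<Longrightarrow> t < b \<Longrightarrow> L * h t * (1 - h t) \<le> h' t"
    and range: "\<And>t. a < t \<Longrightarrow> t < b \<Longrightarrow> 0 \<le> h t \<and> h t \<le> 1"
    and rate_nonneg: "0 \<le> L"
begin

lemma mono:
  assumes "a < s" "s \<le> t" "t < b"
  shows "h s \<le> h t"
proof (rule DERIV_nonneg_imp_nondecreasing[OF \<open>s \<le> t\<close>])
  fix u assume u: "s \<le> u" "u \<le> t"
  then have "0 \<le> L * h u * (1 - h u)" using range[of u] rate_nonneg assms by simp
  then show "\<exists>y. (h has_real_derivative y) (at u) \<and> 0 \<le> y"
    using has_derivative[of u] logistic[of u] u assms by force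
qed

text \<open>Below the half-way point \<open>ln h\<close> grows at rate at least \<open>L/2\<close>.\<close>
lemma small_before_half:
  assumes "a < p" "p < q" "q < b" and half: "h q \<le> 1/2"
  shows "h p \<le> exp (- (L/2) * (q - p))"
proof (cases "h p = 0")
  case False
  then have hp: "0 < h p" using range[of p] assms by auto
  have between: "h p \<le> h t" "h t \<le> 1/2" if "p \<le> t" "t \<le> q" for t
    using mono[of p t] mono[of t q] that assms by auto
  have "((\<lambda>t. ln (h t)) has_field_derivative h' t / h t) (at t)" if "p \<le> t" "t \<le> q" for t
    using has_derivative[of t] between[OF that] hp that assms
    by (auto intro!: derivative_eq_intros simp: field_simps)
  from MVT2[OF \<open>p < q\<close> this]
  obtain z where z: "p < z" "z < q" "ln (h q) - ln (h p) = (q - p) * (h' z / h z)" by blast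
  have hz: "0 < h z" "h z \<le> 1/2" using between[of z] z hp by auto
  have "L * h z * (1/2) \<le> L * h z * (1 - h z)"
    using hz rate_nonneg by (intro mult_left_mono) auto
  also have "\<dots> \<le> h' z" using logistic[of z] z assms by auto
  finally have "L/2 \<le> h' z / h z" using hz by (simp add: field_simps)
  then have "(q - p) * (L/2) \<le> (q - p) * (h' z / h z)" using assms by (intro mult_left_mono) auto
  moreover have "ln (h q) \<le> 0" using between[of q] hp assms by auto
  ultimately have "ln (h p) \<le> - ((q - p) * (L/2))" using z(3) by linarith
  then have "ln (h p) \<le> - (L/2) * (q - p)" by (simp add: mult.commute)
  then show ?thesis using hp by (metis exp_le_cancel_iff exp_ln)
qed simp

lemma reflection:
  "logistic_supersolution (\<lambda>t. 1 - h (- t)) (\<lambda>t. h' (- t)) (- b) (- a) L"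
proof
  fix t assume t: "- b < t" "t < - a"
  show "((\<lambda>t. 1 - h (- t)) has_field_derivative h' (- t)) (at t)"
    using DERIV_chain2[OF has_derivative[of "- t"] DERIV_minus[OF DERIV_ident]] t
    by (auto intro!: derivative_eq_intros)
  show "L * (1 - h (- t)) * (1 - (1 - h (- t))) \<le> h' (- t)"
    using logistic[of "- t"] t by (simp add: algebra_simps)
  show "0 \<le> 1 - h (- t) \<and> 1 - h (- t) \<le> 1" using range[of "- t"] t by simp
qed (rule rate_nonneg)

lemma large_after_half:
  assumes "a < q" "q < t" "t < b" and half: "1/2 \<le> h q"
  shows "1 - h t \<le> exp (- (L/2) * (t - q))"
  using logistic_supersolution.small_before_half[OF reflection, of "- t" "- q"] assms by simp

end

section \<open>The sharp transition\<close>

lemma increment_ge_of_derivative_ge: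
  fixes f f' :: "real \<Rightarrow> real"
  assumes "q \<le> t"
    and "\<And>s. q \<le> s \<Longrightarrow> s \<le> t \<Longrightarrow> (f has_field_derivative f' s) (at s)"
    and "\<And>s. q \<le> s \<Longrightarrow> s \<le> t \<Longrightarrow> c \<le> f' s"
  shows "c * (t - q) \<le> f t - f q"
proof -
  have "(\<lambda>s. f s - c * s) q \<le> (\<lambda>s. f s - c * s) t"
    using assms by (intro DERIV_nonneg_imp_nondecreasing[OF \<open>q \<le> t\<close>])
      (auto intro!: exI derivative_eq_intros)
  then show ?thesis by (simp add: algebra_simps)
qed

text \<open>The area theorem in integrated form: the equivocation has derivative \<open>N h(p)\<close>
  and lies between \<open>0\<close> and \<open>log\<^sub>2 |C|\<close>.\<close>
lemma area_bound_le_code_rate: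
  assumes C: "binary_linear_code N C" and N: "0 < N"
    and st: "0 \<le> s" "s \<le> t" "t \<le> 1"
    and bound: "\<And>u. s \<le> u \<Longrightarrow> u \<le> t \<Longrightarrow> c \<le> exit_fun N C u"
  shows "c * (t - s) \<le> code_rate N C"
proof -
  have "N * c * (t - s) \<le> equivocation N C t - equivocation N C s"
  proof (rule increment_ge_of_derivative_ge[OF st(2) equivocation_has_derivative[OF C]])
    fix u assume u: "s \<le> u" "u \<le> t"
    then show "N * c \<le> (\<Sum>i<N. undetermined_prob N C u i)"
      using bound[OF u] N st by (simp add: exit_fun_eq_undetermined_prob[OF C] field_simps)
  qed
  also have "\<dots> \<le> log 2 (card C)"
    using equivocation_bounds[OF C, of s] equivocation_bounds[OF C, of t] st by simp
  finally show ?thesis using N by (simp add: code_rate_def field_simps)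
qed

text \<open>Were \<open>h (p + \<delta>) > 1/2\<close>, \<open>h\<close> would be close to \<open>1\<close> on \<open>[p + 2\<delta>, 1 - \<delta>]\<close>,
  an interval of length \<open>r + \<delta>\<close>, against the area bound; so \<open>h\<close> is still small at \<open>p\<close>.\<close>
lemma block_error_le_sharp_transition:
  fixes N :: nat and C :: "bool list set" and a b p r \<delta> L :: real
  assumes C: "binary_linear_code N C" and N: "0 < N"
    and ab: "0 \<le> a" "a < p" "1 - \<delta> < b" "b \<le> 1"
    and \<delta>: "0 < \<delta>" "p + 4 * \<delta> = 1 - r" "0 < r" and L: "0 \<le> L"
    and slope: "\<And>t. a < t \<Longrightarrow> t < b \<Longrightarrow>
       L * exit_fun N C t * (1 - exit_fun N C t) \<le> deriv (exit_fun N C) t"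
    and rate: "code_rate N C < r + \<delta> / 2"
    and small: "exp (- (L/2) * \<delta>) < \<delta> / (2 * (r + \<delta>))"
  shows "block_error N C p \<le> N * exp (- (L/2) * \<delta>)"
proof -
  let ?h = "exit_fun N C" and ?\<epsilon> = "exp (- (L/2) * \<delta>)"
  interpret logistic_supersolution ?h "deriv ?h" a b L
  proof
    fix t assume t: "a < t" "t < b"
    then show "(?h has_field_derivative deriv ?h t) (at t)"
      using ab by (intro exit_fun_has_derivative[OF C]) auto
    show "0 \<le> ?h t \<and> ?h t \<le> 1" using exit_fun_bounds[OF C] t ab by auto
  qed (use slope L in auto)
  have half: "?h (p + \<delta>) \<le> 1/2"
  proof (rule ccontr)
    assume "\<not> ?thesis"
    have "1 - ?\<epsilon> \<le> ?h u" if u: "p + 2 * \<delta> \<le> u" "u \<le> 1 - \<delta>" for u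
    proof -
      have "1 - ?h u \<le> exp (- (L/2) * (u - (p + \<delta>)))"
        using \<open>\<not> ?h (p + \<delta>) \<le> 1/2\<close> u ab \<delta> by (intro large_after_half) auto
      also have "\<dots> \<le> ?\<epsilon>" using u L by (simp add: mult_left_mono)
      finally show ?thesis by simp
    qed
    then have "(1 - ?\<epsilon>) * ((1 - \<delta>) - (p + 2 * \<delta>)) \<le> code_rate N C"
      using ab \<delta> by (intro area_bound_le_code_rate[OF C N]) auto
    moreover have "(1 - \<delta>) - (p + 2 * \<delta>) = r + \<delta>" using \<delta> by simp
    ultimately have "(r + \<delta>) - ?\<epsilon> * (r + \<delta>) \<le> code_rate N C"
      by (simp only: left_diff_distrib mult_1)
    moreover have "?\<epsilon> * (r + \<delta>) < \<delta> / 2"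
      using small \<delta> by (simp add: field_simps)
    ultimately show False using rate by linarith
  qed
  have "?h p \<le> ?\<epsilon>" using small_before_half[OF ab(2) _ _ half] ab \<delta> by simp
  have "0 \<le> ?h p" "p \<le> 1" using exit_fun_bounds[OF C] ab \<delta> by auto
  have "block_error N C p \<le> p * (N * ?h p)" using block_error_le[OF C] ab \<delta> by simp
  also have "\<dots> \<le> N * ?h p"
    using \<open>0 \<le> ?h p\<close> \<open>p \<le> 1\<close> ab by (intro mult_left_le_one_le) auto
  also have "\<dots> \<le> N * ?\<epsilon>" using \<open>?h p \<le> ?\<epsilon>\<close> by (intro mult_left_mono) auto
  finally show ?thesis .
qed

lemma exp_decay_tendsto_zero:
  fixes L :: "nat \<Rightarrow> real" and \<delta> :: real
  assumes L: "filterlim L at_top sequentially" and \<delta>: "0 < \<delta>"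
  shows "(\<lambda>n. exp (- (L n / 2) * \<delta>)) \<longlonglongrightarrow> 0"
proof -
  have "filterlim (\<lambda>n. \<delta> / 2 * L n) at_top sequentially"
    using \<delta> by (intro filterlim_tendsto_pos_mult_at_top[OF tendsto_const _ L]) simp
  then have "filterlim (\<lambda>n. - (L n / 2) * \<delta>) at_bot sequentially"
    by (simp add: filterlim_uminus_at_top algebra_simps)
  then show ?thesis by (rule filterlim_compose[OF exp_at_bot])
qed

text \<open>The sequence is \<open>N powr (1 - w \<delta> / 2)\<close> once \<open>N \<ge> 1\<close>.\<close>
lemma polynomial_decay_tendsto_zero:
  fixes N :: "nat \<Rightarrow> nat" and w :: "nat \<Rightarrow> real" and \<delta> :: real
  assumes N: "filterlim N at_top sequentially" and w: "filterlim w at_top sequentially"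
    and \<delta>: "0 < \<delta>"
  shows "(\<lambda>n. N n * exp (- (w n * ln (N n) / 2) * \<delta>)) \<longlonglongrightarrow> 0"
proof -
  have lnN: "filterlim (\<lambda>n. ln (real (N n))) at_top sequentially"
    using filterlim_compose[OF ln_at_top filterlim_compose[OF filterlim_real_sequentially N]] .
  have "filterlim (\<lambda>n. -1 + \<delta> / 2 * w n) at_top sequentially"
    using \<delta> by (intro filterlim_tendsto_add_at_top[OF tendsto_const]
      filterlim_tendsto_pos_mult_at_top[OF tendsto_const _ w]) simp_all
  then have "filterlim (\<lambda>n. ln (N n) * (-1 + \<delta> / 2 * w n)) at_top sequentially"
    by (rule filterlim_at_top_mult_at_top[OF lnN])
  then have "filterlim (\<lambda>n. - (ln (N n) * (-1 + \<delta> / 2 * w n))) at_bot sequentially"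
    by (simp add: filterlim_uminus_at_top)
  then have "(\<lambda>n. exp (- (ln (N n) * (-1 + \<delta> / 2 * w n)))) \<longlonglongrightarrow> 0"
    by (rule filterlim_compose[OF exp_at_bot])
  moreover have "\<forall>\<^sub>F n in sequentially. 1 \<le> N n" using N by (simp add: filterlim_at_top)
  then have "\<forall>\<^sub>F n in sequentially. exp (- (ln (N n) * (-1 + \<delta> / 2 * w n)))
      = N n * exp (- (w n * ln (N n) / 2) * \<delta>)"
  proof (rule eventually_mono)
    fix n assume "1 \<le> N n"
    have "exp (- (ln (N n) * (-1 + \<delta> / 2 * w n))) = exp (ln (N n)) * exp (- (w n * ln (N n) / 2) * \<delta>)"
      by (simp add: exp_add[symmetric] algebra_simps)
    then show "exp (- (ln (N n) * (-1 + \<delta> / 2 * w n))) = N n * exp (- (w n * ln (N n) / 2) * \<delta>)"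
      using \<open>1 \<le> N n\<close> by simp
  qed
  ultimately show ?thesis by (rule Lim_transform_eventually)
qed

theorem theorem5:
  fixes N :: "nat \<Rightarrow> nat" and C :: "nat \<Rightarrow> bool list set"
    and r :: real and a b w :: "nat \<Rightarrow> real"
  assumes codes: "\<And>n. binary_linear_code (N n) (C n) \<and> proper_code (N n) (C n)
                        \<and> min_dist_ge 2 (C n)"
    and N_lim: "filterlim N at_top sequentially"
    and rate_lim: "(\<lambda>n. code_rate (N n) (C n)) \<longlonglongrightarrow> r"
    and r_pos: "0 < r" and r_lt1: "r < 1"
    and ab: "\<And>n. 0 \<le> a n \<and> a n < b n \<and> b n \<le> 1"
    and a_lim: "a \<longlonglongrightarrow> 0" and b_lim: "b \<longlonglongrightarrow> 1"
    and w_lim: "filterlim w at_top sequentially"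
    and slope: "\<And>n p. a n < p \<Longrightarrow> p < b n \<Longrightarrow>
       deriv (exit_fun (N n) (C n)) p
         \<ge> w n * ln (real (N n)) * exit_fun (N n) (C n) p * (1 - exit_fun (N n) (C n) p)"
  shows "capacity_achieving N C r"
  unfolding capacity_achieving_def
proof (intro allI impI)
  fix p assume p: "0 \<le> p \<and> p < 1 - r"
  have C: "binary_linear_code (N n) (C n)" for n using codes by blast
  show "(\<lambda>n. block_error (N n) (C n) p) \<longlonglongrightarrow> 0"
  proof (cases "p = 0")
    case True
    then show ?thesis by (simp add: block_error_zero[OF C])
  next
    case False
    define \<delta> where "\<delta> = (1 - r - p) / 4"
    have \<delta>: "0 < \<delta>" "p + 4 * \<delta> = 1 - r" using p by (simp_all add: \<delta>_def field_simps)
    define L where "L n = w n * ln (N n)" for n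
    have "filterlim (\<lambda>n. ln (real (N n))) at_top sequentially"
      using filterlim_compose[OF ln_at_top filterlim_compose[OF filterlim_real_sequentially N_lim]] .
    then have L_lim: "filterlim L at_top sequentially"
      unfolding L_def by (rule filterlim_at_top_mult_at_top[OF w_lim])
    have ev: "\<forall>\<^sub>F n in sequentially. 1 \<le> N n \<and> a n < p \<and> 1 - \<delta> < b n \<and> 0 \<le> L n
        \<and> code_rate (N n) (C n) < r + \<delta> / 2 \<and> exp (- (L n / 2) * \<delta>) < \<delta> / (2 * (r + \<delta>))"
      using N_lim L_lim unfolding filterlim_at_top
      by (intro eventually_conj order_tendstoD[OF a_lim] order_tendstoD[OF b_lim] order_tendstoD[OF rate_lim]
          order_tendstoD[OF exp_decay_tendsto_zero[OF L_lim \<delta>(1)]]) (use p False \<delta> r_pos in auto)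
    have upper: "\<forall>\<^sub>F n in sequentially. block_error (N n) (C n) p \<le> N n * exp (- (L n / 2) * \<delta>)"
    proof (rule eventually_mono[OF ev])
      fix n assume n: "1 \<le> N n \<and> a n < p \<and> 1 - \<delta> < b n \<and> 0 \<le> L n
        \<and> code_rate (N n) (C n) < r + \<delta> / 2 \<and> exp (- (L n / 2) * \<delta>) < \<delta> / (2 * (r + \<delta>))"
      show "block_error (N n) (C n) p \<le> N n * exp (- (L n / 2) * \<delta>)" unfolding L_def
        by (rule block_error_le_sharp_transition[OF C _ _ _ _ _ \<delta> r_pos _ slope])
          (use n ab[of n] in \<open>auto simp: L_def\<close>)
    qed
    have nonneg: "\<forall>\<^sub>F n in sequentially. 0 \<le> block_error (N n) (C n) p"
      using block_error_nonneg[OF C] p r_pos by (intro always_eventually allI) simp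
    have "(\<lambda>n. N n * exp (- (L n / 2) * \<delta>)) \<longlonglongrightarrow> 0"
      unfolding L_def by (rule polynomial_decay_tendsto_zero[OF N_lim w_lim \<delta>(1)])
    with nonneg upper show ?thesis by (rule tendsto_sandwich[OF _ _ tendsto_const])
  qed
qed

end
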